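(* Let $d\ge 2$. Identifying $P(\mathbb{Z}^d)$ with its image under the diagonal embedding into $\mathbb{Z}_S^d$, we have $P(\mathbb{Z}_S^d)=\mathbb{Z}_S^\times\cdot P(\mathbb{Z}^d)$.
   Context: $S=\{\infty,p_1,\dots,p_s\}$ with $p_i$ distinct primes, $\mathbb{Z}_S=\mathbb{Z}[p_1^{-1},\dots,p_s^{-1}]$, $\mathbb{Z}_S^\times=\{\pm p_1^{k_1}\cdots p_s^{k_s}:k_i\in\mathbb{Z}\}$. $P(\mathbb{Z}_S^d)=\mathrm{SL}_d(\mathbb{Z}_S)\cdot\mathbf e_1$ and $P(\mathbb{Z}^d)=\mathrm{SL}_d(\mathbb{Z})\cdot\mathbf e_1$ (the integer vectors with coprime coordinates). *)

theory Defs
  imports "HOL-Analysis.Analysis"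
begin

text \<open>S = {infinity} union PS, where PS is a finite set of (distinct) primes.
  Z_S = Z[1/p : p in PS], viewed inside the rationals.\<close>

definition ZS :: "nat set \<Rightarrow> rat set" where
  "ZS PS = {q. \<exists>(a::int) (k::nat \<Rightarrow> nat).
               q = of_int a / (\<Prod>p\<in>PS. of_nat p ^ k p)}"

definition ZS_units :: "nat set \<Rightarrow> rat set" where
  "ZS_units PS = {q. \<exists>(\<epsilon>::rat) (k::nat \<Rightarrow> int). \<epsilon> \<in> {1, -1} \<and>
                     q = \<epsilon> * (\<Prod>p\<in>PS. of_nat p powi k p)}"

text \<open>SL_d(R) for a subring R of Q (given as a set), d = CARD('n).\<close>
definition SL_over :: "rat set \<Rightarrow> (rat^'n^'n) set" where
  "SL_over R = {A. (\<forall>i j. A $ i $ j \<in> R) \<and> det A = 1}"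

text \<open>P(R^d) = SL_d(R) . e, with e the standard basis vector at index i0.\<close>
definition prim_vecs :: "rat set \<Rightarrow> 'n::finite \<Rightarrow> (rat^'n) set" where
  "prim_vecs R i0 = {A *v axis i0 1 | A. A \<in> SL_over R}"

end

theory Submission
  imports Defs
begin

text \<open>
  A vector x of P(Z_S^d) is the column B e of some B in SL_d(Z_S). Multiplying x by a power of
  the product of the primes of S makes it integral, and dividing by the gcd of the resulting
  entries writes x = u v with u in Z_S and v a primitive integer vector. The determinant is linear
  in that column, so 1 = det B = u det B', where B' is B with the column replaced by v; hence u is
  invertible in Z_S, i.e. of the form +- prod p^k. A primitive integer vector lies in the
  SL_d(Z)-orbit of e: transvections carry out the Euclidean algorithm on its entries, ending at a
  signed standard basis vector, which further transvections move to e because d >= 2.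
  Conversely u (A e) = A' e, where A' is A with the column of e scaled by u and another column
  scaled by u^-1.
\<close>

section \<open>The ring Z_S and its units\<close>

lemma Ints_mult_power_mono:
  fixes q :: "'a::comm_ring_1"
  assumes "x ^ m * q \<in> \<int>" and "x \<in> \<int>" and "m \<le> n"
  shows "x ^ n * q \<in> \<int>"
proof -
  have "x ^ n * q = x ^ (n - m) * (x ^ m * q)"
    using assms(3) by (metis le_add_diff_inverse2 mult.assoc power_add)
  then show ?thesis using assms(1,2) by simp
qed

context
  fixes PS :: "nat set"
  assumes finite_PS: "finite PS" and zero_notin_PS: "0 \<notin> PS"
begin

lemma prod_PS_in_Ints: "(\<Prod>p\<in>PS. of_nat p) \<in> \<int>"
  by (simp add: Ints_prod)

lemma ZS_iff: "q \<in> ZS PS \<longleftrightarrow> (\<exists>m. (\<Prod>p\<in>PS. of_nat p) ^ m * q \<in> \<int>)"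
proof
  assume "q \<in> ZS PS"
  then obtain a k where q: "q = of_int a / (\<Prod>p\<in>PS. of_nat p ^ k p)"
    unfolding ZS_def by auto
  define m where "m = (\<Sum>p\<in>PS. k p)"
  have "k p \<le> m" if "p \<in> PS" for p
    unfolding m_def using that finite_PS by (simp add: member_le_sum)
  then have "(of_nat p :: rat) ^ m = of_nat p ^ k p * of_nat p ^ (m - k p)" if "p \<in> PS" for p
    using that by (metis le_add_diff_inverse power_add)
  then have factor: "(\<Prod>p\<in>PS. (of_nat p :: rat)) ^ m =
      (\<Prod>p\<in>PS. of_nat p ^ k p) * of_nat (\<Prod>p\<in>PS. p ^ (m - k p))"
    by (simp add: prod_power_distrib prod.distrib[symmetric])
  have "(\<Prod>p\<in>PS. (of_nat p :: rat) ^ k p) \<noteq> 0"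
    using finite_PS zero_notin_PS by (auto simp: prod_zero_iff)
  then have "(\<Prod>p\<in>PS. of_nat p) ^ m * q = of_int a * of_nat (\<Prod>p\<in>PS. p ^ (m - k p))"
    by (simp add: q factor)
  then show "\<exists>m. (\<Prod>p\<in>PS. of_nat p) ^ m * q \<in> \<int>" by (metis Ints_mult Ints_of_int Ints_of_nat)
next
  assume "\<exists>m. (\<Prod>p\<in>PS. of_nat p) ^ m * q \<in> \<int>"
  then obtain m a where "(\<Prod>p\<in>PS. of_nat p) ^ m * q = of_int a" by (auto elim: Ints_cases)
  moreover have "((\<Prod>p\<in>PS. of_nat p) :: rat) \<noteq> 0"
    using finite_PS zero_notin_PS by auto
  ultimately have "q = of_int a / (\<Prod>p\<in>PS. of_nat p) ^ m"
    by (simp add: field_simps)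
  then have "q = of_int a / (\<Prod>p\<in>PS. of_nat p ^ m)"
    by (simp add: prod_power_distrib)
  then show "q \<in> ZS PS" unfolding ZS_def by (intro CollectI exI[of _ a] exI[of _ "\<lambda>_. m"])
qed

lemma Ints_subset_ZS: "\<int> \<subseteq> ZS PS"
proof
  fix q :: rat assume "q \<in> \<int>"
  then have "(\<Prod>p\<in>PS. of_nat p) ^ 0 * q \<in> \<int>" by simp
  then show "q \<in> ZS PS" unfolding ZS_iff by blast
qed

lemma ZS_add: "q \<in> ZS PS \<Longrightarrow> r \<in> ZS PS \<Longrightarrow> q + r \<in> ZS PS"
proof -
  assume "q \<in> ZS PS" "r \<in> ZS PS"
  then obtain m n where "(\<Prod>p\<in>PS. of_nat p) ^ m * q \<in> \<int>" "(\<Prod>p\<in>PS. of_nat p) ^ n * r \<in> \<int>"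
    unfolding ZS_iff by auto
  then have "(\<Prod>p\<in>PS. of_nat p) ^ (m + n) * q \<in> \<int>" "(\<Prod>p\<in>PS. of_nat p) ^ (m + n) * r \<in> \<int>"
    using Ints_mult_power_mono[OF _ prod_PS_in_Ints] le_add1 le_add2 by blast+
  then show ?thesis unfolding ZS_iff by (metis Ints_add distrib_left)
qed

lemma ZS_mult: "q \<in> ZS PS \<Longrightarrow> r \<in> ZS PS \<Longrightarrow> q * r \<in> ZS PS"
proof -
  assume "q \<in> ZS PS" "r \<in> ZS PS"
  then obtain m n where "(\<Prod>p\<in>PS. of_nat p) ^ m * q \<in> \<int>" "(\<Prod>p\<in>PS. of_nat p) ^ n * r \<in> \<int>"
    unfolding ZS_iff by auto
  then have "((\<Prod>p\<in>PS. of_nat p) ^ m * q) * ((\<Prod>p\<in>PS. of_nat p) ^ n * r) \<in> \<int>" by simp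
  also have "((\<Prod>p\<in>PS. of_nat p) ^ m * q) * ((\<Prod>p\<in>PS. of_nat p) ^ n * r) =
      (\<Prod>p\<in>PS. of_nat p) ^ (m + n) * (q * r)"
    by (simp add: power_add mult_ac)
  finally show ?thesis unfolding ZS_iff by blast
qed

lemma ZS_sum: "(\<And>x. x \<in> A \<Longrightarrow> f x \<in> ZS PS) \<Longrightarrow> sum f A \<in> ZS PS"
  by (induction A rule: infinite_finite_induct) (simp_all add: ZS_add subsetD[OF Ints_subset_ZS])

lemma ZS_prod: "(\<And>x. x \<in> A \<Longrightarrow> f x \<in> ZS PS) \<Longrightarrow> prod f A \<in> ZS PS"
  by (induction A rule: infinite_finite_induct) (simp_all add: ZS_mult subsetD[OF Ints_subset_ZS])

lemma det_in_ZS: "(\<And>i j. A $ i $ j \<in> ZS PS) \<Longrightarrow> det A \<in> ZS PS"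
  unfolding det_def by (intro ZS_sum ZS_mult ZS_prod) (use Ints_subset_ZS in auto)

lemma ZS_common_denominator:
  "finite I \<Longrightarrow> (\<And>i. i \<in> I \<Longrightarrow> f i \<in> ZS PS) \<Longrightarrow> \<exists>m. \<forall>i\<in>I. (\<Prod>p\<in>PS. of_nat p) ^ m * f i \<in> \<int>"
proof (induction I rule: finite_induct)
  case (insert i I)
  obtain m where "(\<Prod>p\<in>PS. of_nat p) ^ m * f i \<in> \<int>"
    using insert.prems ZS_iff by blast
  moreover obtain n where "\<forall>j\<in>I. (\<Prod>p\<in>PS. of_nat p) ^ n * f j \<in> \<int>"
    using insert by blast
  ultimately have "\<forall>j\<in>insert i I. (\<Prod>p\<in>PS. of_nat p) ^ (m + n) * f j \<in> \<int>"
    using Ints_mult_power_mono[OF _ prod_PS_in_Ints] le_add1 le_add2 by blast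
  then show ?case by blast
qed simp

lemma power_int_in_ZS:
  assumes "p \<in> PS"
  shows "of_nat p powi k \<in> ZS PS"
proof (cases "k \<ge> 0")
  case True
  then have "(of_nat p :: rat) powi k = of_nat (p ^ nat k)"
    by (simp add: power_int_def)
  then show ?thesis using Ints_subset_ZS by auto
next
  case False
  have "(\<Prod>q\<in>PS. (of_nat q :: rat) ^ (if q = p then nat (- k) else 0)) = of_nat p ^ nat (- k)"
    using assms finite_PS by (simp add: if_distrib[of "power _"] prod.delta cong: if_cong)
  then have "(of_nat p :: rat) powi k = of_int 1 / (\<Prod>q\<in>PS. of_nat q ^ (if q = p then nat (- k) else 0))"
    using False by (simp add: power_int_def field_simps)
  then show ?thesis
    unfolding ZS_def by (intro CollectI exI[of _ 1] exI[of _ "\<lambda>q. if q = p then nat (- k) else 0"])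
qed

lemma ZS_units_subset_ZS: "ZS_units PS \<subseteq> ZS PS"
proof
  fix u assume "u \<in> ZS_units PS"
  then obtain \<epsilon> k where "\<epsilon> \<in> {1, -1}" and u: "u = \<epsilon> * (\<Prod>p\<in>PS. of_nat p powi k p)"
    unfolding ZS_units_def by blast
  then have "\<epsilon> \<in> \<int>" by auto
  then have "\<epsilon> \<in> ZS PS" using Ints_subset_ZS by blast
  moreover have "(\<Prod>p\<in>PS. of_nat p powi k p) \<in> ZS PS"
    by (rule ZS_prod) (rule power_int_in_ZS)
  ultimately show "u \<in> ZS PS" unfolding u by (rule ZS_mult)
qed

lemma ZS_units_inverse:
  assumes "u \<in> ZS_units PS"
  shows "u \<noteq> 0" and "inverse u \<in> ZS_units PS"
proof -
  obtain \<epsilon> k where \<epsilon>: "\<epsilon> \<in> {1, -1}" and u: "u = \<epsilon> * (\<Prod>p\<in>PS. of_nat p powi k p)"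
    using assms unfolding ZS_units_def by blast
  show "u \<noteq> 0" using \<epsilon> finite_PS zero_notin_PS by (auto simp: u prod_zero_iff)
  have "inverse u = \<epsilon> * (\<Prod>p\<in>PS. of_nat p powi (- k p))"
    using \<epsilon> by (auto simp: u power_int_minus prod_inversef[symmetric])
  then show "inverse u \<in> ZS_units PS"
    unfolding ZS_units_def using \<epsilon> by (intro CollectI exI[of _ \<epsilon>] exI[of _ "\<lambda>p. - k p"]) simp
qed

end

lemma dvd_power_prod_primes_obtain_exponents:
  fixes G :: nat
  assumes "finite PS" and "\<forall>p\<in>PS. prime p" and "G dvd (\<Prod>PS) ^ K"
  obtains e where "G = (\<Prod>p\<in>PS. p ^ e p)"
proof -
  have "G \<noteq> 0"
    using assms by (metis dvd_0_left_iff not_prime_0 power_not_zero prod_zero_iff)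
  have "prime_factors G \<subseteq> PS"
  proof
    fix q assume q: "q \<in> prime_factors G"
    then have "prime q" "q dvd (\<Prod>PS) ^ K"
      using assms(3) by (auto simp: in_prime_factors_iff intro: dvd_trans)
    then obtain p where "p \<in> PS" "q dvd p"
      using assms(1) prime_dvd_power prime_dvd_prod_iff[of PS q "\<lambda>x. x"] by blast
    with \<open>prime q\<close> assms(2) show "q \<in> PS" by (metis primes_dvd_imp_eq)
  qed
  have "G = (\<Prod>p\<in>prime_factors G. p ^ multiplicity p G)"
    using \<open>G \<noteq> 0\<close> by (simp add: prime_factorization_nat)
  also have "\<dots> = (\<Prod>p\<in>PS. p ^ multiplicity p G)"
    using assms(1,2) \<open>prime_factors G \<subseteq> PS\<close>
    by (intro prod.mono_neutral_left) (auto simp: in_prime_factors_iff not_dvd_imp_multiplicity_0)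
  finally show ?thesis by (rule that)
qed

lemma int_dvd_div_power_in_ZS_units:
  fixes a :: int
  assumes "finite PS" and "\<forall>p\<in>PS. prime p" and "a dvd int ((\<Prod>PS) ^ K)"
  shows "of_int a / (\<Prod>p\<in>PS. of_nat p) ^ m \<in> ZS_units PS"
proof -
  have "0 \<notin> PS" using assms(2) by auto
  then have "a \<noteq> 0" using assms(1,3) by auto
  have "nat \<bar>a\<bar> dvd (\<Prod>PS) ^ K"
    using assms(3) by (simp add: nat_dvd_iff)
  then obtain k where k: "nat \<bar>a\<bar> = (\<Prod>p\<in>PS. p ^ k p)"
    by (rule dvd_power_prod_primes_obtain_exponents[OF assms(1,2)])
  have "\<bar>a\<bar> = int (\<Prod>p\<in>PS. p ^ k p)"
    unfolding k[symmetric] by simp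
  then have "(of_int \<bar>a\<bar> :: rat) = (\<Prod>p\<in>PS. of_nat p ^ k p)"
    by simp
  then have a_eq: "of_int a = of_int (sgn a) * (\<Prod>p\<in>PS. of_nat p ^ k p :: rat)"
    by (metis of_int_mult sgn_mult_abs)
  have "of_int a / (\<Prod>p\<in>PS. of_nat p) ^ m =
      of_int (sgn a) * ((\<Prod>p\<in>PS. of_nat p ^ k p) / (\<Prod>p\<in>PS. of_nat p ^ m) :: rat)"
    by (simp only: a_eq prod_power_distrib times_divide_eq_right)
  also have "\<dots> = of_int (sgn a) * (\<Prod>p\<in>PS. of_nat p powi (int (k p) - int m))"
    using \<open>0 \<notin> PS\<close>
    by (auto simp: prod_dividef[symmetric] intro!: prod.cong) (subst power_int_diff; auto)
  finally show ?thesis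
    unfolding ZS_units_def using \<open>a \<noteq> 0\<close>
    by (intro CollectI exI[of _ "of_int (sgn a)"] exI[of _ "\<lambda>p. int (k p) - int m"] conjI)
      (auto simp: sgn_if)
qed

lemma ZS_units_iff:
  assumes "finite PS" and "\<forall>p\<in>PS. prime p"
  shows "u \<in> ZS_units PS \<longleftrightarrow> u \<in> ZS PS \<and> u \<noteq> 0 \<and> inverse u \<in> ZS PS"
proof -
  have "0 \<notin> PS" using assms(2) by auto
  note ZS_facts = ZS_iff[OF assms(1) this] ZS_units_inverse[OF assms(1) this]
    ZS_units_subset_ZS[OF assms(1) this]
  define P where "P = (\<Prod>p\<in>PS. of_nat p :: rat)"
  have "P \<noteq> 0" unfolding P_def using assms(1) \<open>0 \<notin> PS\<close> by auto
  show ?thesis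
  proof (intro iffI conjI)
    assume u: "u \<in> ZS PS \<and> u \<noteq> 0 \<and> inverse u \<in> ZS PS"
    then obtain m n a b where a: "P ^ m * u = of_int a" and b: "P ^ n * inverse u = of_int b"
      unfolding ZS_facts P_def by (auto elim!: Ints_cases)
    have "of_int (a * b) = P ^ m * P ^ n * (u * inverse u)"
      by (simp add: a[symmetric] b[symmetric] mult_ac)
    also have "\<dots> = of_int (int ((\<Prod>PS) ^ (m + n)))"
      using u by (simp add: P_def power_add)
    finally have "a dvd int ((\<Prod>PS) ^ (m + n))"
      by (metis dvd_triv_left of_int_eq_iff)
    moreover have "u = of_int a / P ^ m"
      using a \<open>P \<noteq> 0\<close> by (simp add: eq_divide_eq mult.commute)
    ultimately show "u \<in> ZS_units PS"
      unfolding P_def by (metis int_dvd_div_power_in_ZS_units[OF assms])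
  next
    assume "u \<in> ZS_units PS"
    then show "u \<in> ZS PS" "u \<noteq> 0" "inverse u \<in> ZS PS"
      using ZS_facts(2-4) by blast+
  qed
qed

section \<open>Column scalings and transvections\<close>

lemma matrix_vector_mult_axis_nth: "(A *v axis k 1) $ i = A $ i $ k"
  by (simp add: matrix_vector_mult_def axis_def if_distrib cong: if_cong)

lemma ex_other_index:
  fixes k :: "'n::finite"
  assumes "CARD('n) \<ge> 2"
  obtains j where "j \<noteq> k"
proof -
  have "UNIV \<noteq> {k}"
  proof
    assume "UNIV = {k}"
    then have "CARD('n) = card {k}" by (rule arg_cong)
    with assms show False by simp
  qed
  then show ?thesis using that by blast
qed

definition scale_column :: "'n \<Rightarrow> 'a::comm_ring_1 \<Rightarrow> 'a^'n^'m \<Rightarrow> 'a^'n^'m" where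
  "scale_column k c A = (\<chi> i j. if j = k then c * A $ i $ j else A $ i $ j)"

lemma det_scale_column: "det (scale_column k c A) = c * det (A :: 'a::comm_ring_1^'n::finite^'n)"
proof -
  have "transpose (scale_column k c A) = (\<chi> j. if j = k then c *s transpose A $ j else transpose A $ j)"
    unfolding scale_column_def transpose_def by (auto simp: vec_eq_iff)
  then have "det (scale_column k c A) = c * det (\<chi> j. if j = k then transpose A $ j else transpose A $ j)"
    using det_row_mul[of k c "\<lambda>j. transpose A $ j" "\<lambda>j. transpose A $ j"] det_transpose
    by metis
  then show ?thesis by (simp add: det_transpose)
qed

lemma scale_column_mult_axis: "scale_column k c A *v axis k 1 = c *s (A *v axis k 1)"
  by (simp add: vec_eq_iff matrix_vector_mult_axis_nth scale_column_def)

lemma scale_column_mult_other_axis: "l \<noteq> k \<Longrightarrow> scale_column k c A *v axis l 1 = A *v axis l 1"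
  by (simp add: vec_eq_iff matrix_vector_mult_axis_nth scale_column_def)

text \<open>Written in the row form used by the library lemma det_row_operation.\<close>
definition transvection :: "'n \<Rightarrow> 'n \<Rightarrow> 'a \<Rightarrow> 'a::comm_ring_1^'n::finite^'n" where
  "transvection i j c = (\<chi> k. if k = i then row i (mat 1) + c *s row j (mat 1) else row k (mat 1))"

lemma transvection_nth:
  "transvection i j c $ a $ b = (if a = b then 1 else 0) + (if a = i \<and> b = j then c else 0)"
  by (auto simp: transvection_def row_def mat_def)

lemma det_transvection: "i \<noteq> j \<Longrightarrow> det (transvection i j c) = 1"
  unfolding transvection_def using det_row_operation[of i j "mat 1" c] by simp

lemma transvection_mult_vec:
  assumes "i \<noteq> j"
  shows "transvection i j c *v w = (\<chi> k. if k = i then w $ i + c * w $ j else w $ k)"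
proof -
  have "(transvection i j c *v w) $ k = (\<Sum>b\<in>UNIV. (if k = b then w $ b else 0) + (if k = i \<and> b = j then c * w $ b else 0))" for k
    unfolding matrix_vector_mult_def transvection_nth by (auto intro!: sum.cong simp: algebra_simps)
  then show ?thesis
    by (auto simp: vec_eq_iff sum.distrib)
qed

lemma transvection_in_SL_Ints: "i \<noteq> j \<Longrightarrow> c \<in> \<int> \<Longrightarrow> transvection i j c \<in> SL_over \<int>"
  by (auto simp: SL_over_def det_transvection transvection_nth)

lemma SL_over_Ints_mult: "A \<in> SL_over \<int> \<Longrightarrow> B \<in> SL_over \<int> \<Longrightarrow> A ** B \<in> SL_over \<int>"
  unfolding SL_over_def
  by (auto simp: det_mul) (auto simp: matrix_matrix_mult_def intro!: Ints_sum Ints_mult)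

lemma prim_vecs_Ints_mult: "A \<in> SL_over \<int> \<Longrightarrow> v \<in> prim_vecs \<int> i0 \<Longrightarrow> A *v v \<in> prim_vecs \<int> i0"
  unfolding prim_vecs_def by (auto simp: matrix_vector_mul_assoc intro!: SL_over_Ints_mult)

lemma axis_in_prim_vecs_Ints_move:
  assumes "i \<noteq> j" and "axis i c \<in> prim_vecs \<int> i0"
  shows "axis j c \<in> prim_vecs \<int> i0" and "axis j (- c) \<in> prim_vecs \<int> i0"
proof -
  have "axis j c = transvection i j (- 1) *v (transvection j i 1 *v axis i c)"
    and "axis j (- c) = transvection i j 1 *v (transvection j i (- 1) *v axis i c)"
    using assms(1) by (auto simp: transvection_mult_vec vec_eq_iff axis_def)
  then show "axis j c \<in> prim_vecs \<int> i0" and "axis j (- c) \<in> prim_vecs \<int> i0"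
    using assms by (metis prim_vecs_Ints_mult transvection_in_SL_Ints Ints_1 Ints_minus)+
qed

lemma axis_in_prim_vecs_Ints:
  assumes "CARD('n::finite) \<ge> 2" and "c = 1 \<or> c = - 1"
  shows "axis k c \<in> prim_vecs \<int> (i0 :: 'n)"
proof -
  have "(mat 1 :: rat^'n^'n) $ i $ j \<in> \<int>" for i j
    by (simp add: mat_def)
  then have "(mat 1 :: rat^'n^'n) \<in> SL_over \<int>" by (auto simp: SL_over_def)
  then have base: "axis i0 1 \<in> prim_vecs \<int> i0" unfolding prim_vecs_def by force
  have other: "axis k 1 \<in> prim_vecs \<int> i0" "axis k (- 1) \<in> prim_vecs \<int> i0" if "k \<noteq> i0" for k
    using axis_in_prim_vecs_Ints_move[OF _ base] that by auto
  obtain j where "j \<noteq> i0" using ex_other_index[OF assms(1)] .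
  then have "axis i0 (- 1) \<in> prim_vecs \<int> i0"
    using axis_in_prim_vecs_Ints_move(2)[OF _ other(1)] by auto
  then show ?thesis using assms(2) base other by (cases "k = i0") auto
qed

section \<open>Primitive vectors\<close>

lemma common_divisor_fun_upd_add_mult:
  fixes f :: "'a \<Rightarrow> 'b::comm_ring_1"
  assumes "i \<noteq> j"
  shows "(\<forall>k. d dvd (f(i := f i + c * f j)) k) \<longleftrightarrow> (\<forall>k. d dvd f k)"
proof
  assume d: "\<forall>k. d dvd (f(i := f i + c * f j)) k"
  then have "d dvd (f i + c * f j) - c * f j"
    using assms by (metis dvd_diff dvd_mult fun_upd_other fun_upd_same)
  then show "\<forall>k. d dvd f k"
    using d by (metis add_diff_cancel_right' fun_upd_other)
qed auto

lemma common_divisor_div_Gcd_is_unit: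
  fixes f :: "'a \<Rightarrow> int"
  assumes "Gcd (range f) \<noteq> 0" and "\<forall>k. d dvd f k div Gcd (range f)"
  shows "is_unit d"
proof -
  have "d * Gcd (range f) dvd f k" for k
    using assms(2) by (metis Gcd_dvd dvd_div_iff_mult rangeI assms(1))
  then have "d * Gcd (range f) dvd Gcd (range f)"
    by (metis Gcd_greatest rangeE)
  then have "d * Gcd (range f) dvd 1 * Gcd (range f)"
    by (simp only: mult_1)
  then show ?thesis using assms(1) by (metis dvd_times_right_cancel_iff)
qed

lemma primitive_int_vector_in_prim_vecs_Ints:
  fixes f :: "'n::finite \<Rightarrow> int" and i0 :: 'n
  assumes "CARD('n) \<ge> 2" and "\<And>d. \<forall>k. d dvd f k \<Longrightarrow> is_unit d"
  shows "(\<chi> k. (of_int (f k) :: rat)) \<in> prim_vecs \<int> i0"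
  using assms(2)
proof (induction "\<Sum>k\<in>UNIV. nat \<bar>f k\<bar>" arbitrary: f rule: less_induct)
  case less
  consider (two) i j where "i \<noteq> j" "f i \<noteq> 0" "f j \<noteq> 0" "\<bar>f j\<bar> \<le> \<bar>f i\<bar>"
    | (one) k where "\<And>j. j \<noteq> k \<Longrightarrow> f j = 0"
    by (metis linorder_le_cases)
  then show ?case
  proof cases
    case two
    define c where "c = - (sgn (f i) * sgn (f j))"
    define g where "g = f(i := f i + c * f j)"
    have "\<bar>g i\<bar> < \<bar>f i\<bar>"
      using two unfolding g_def c_def by (cases "f i > 0"; cases "f j > 0") (auto simp: sgn_if)
    then have "(\<Sum>k\<in>UNIV. nat \<bar>g k\<bar>) < (\<Sum>k\<in>UNIV. nat \<bar>f k\<bar>)"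
      by (intro sum_strict_mono_ex1) (auto simp: g_def)
    moreover have "is_unit d" if "\<forall>k. d dvd g k" for d
      using that less.prems common_divisor_fun_upd_add_mult[OF \<open>i \<noteq> j\<close>] unfolding g_def by blast
    ultimately have "(\<chi> k. (of_int (g k) :: rat)) \<in> prim_vecs \<int> i0"
      using less.hyps by blast
    moreover have "(\<chi> k. (of_int (f k) :: rat)) = transvection i j (- of_int c) *v (\<chi> k. of_int (g k))"
      using two by (simp add: transvection_mult_vec vec_eq_iff g_def)
    ultimately show ?thesis
      using two by (metis prim_vecs_Ints_mult transvection_in_SL_Ints Ints_minus Ints_of_int)
  next
    case one
    have "\<forall>j. f k dvd f j" using one by (metis dvd_0_right dvd_refl)
    then have "\<bar>f k\<bar> = 1" using less.prems by simp
    then have "f k = 1 \<or> f k = - 1" by arith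
    moreover have "(\<chi> j. (of_int (f j) :: rat)) = axis k (of_int (f k))"
      using one by (auto simp: vec_eq_iff axis_def)
    ultimately show ?thesis using axis_in_prim_vecs_Ints[OF assms(1)] by auto
  qed
qed

lemma ZS_vector_eq_scaled_primitive:
  fixes x :: "rat^'n::finite"
  assumes "finite PS" and "0 \<notin> PS" and "x \<noteq> 0" and "\<And>k. x $ k \<in> ZS PS"
  obtains u f where "u \<in> ZS PS" and "x = u *s (\<chi> k. of_int (f k))"
    and "\<And>d. \<forall>k. d dvd f k \<Longrightarrow> is_unit d"
proof -
  define N where "N = (\<Prod>p\<in>PS. of_nat p :: rat)"
  obtain m where "\<forall>k\<in>UNIV. N ^ m * x $ k \<in> \<int>"
    unfolding N_def using ZS_common_denominator[OF assms(1,2) finite_class.finite_UNIV, of "\<lambda>k. x $ k"] assms(4) by blast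
  then have "\<forall>k. \<exists>z. N ^ m * x $ k = of_int z"
    by (auto elim!: Ints_cases)
  then obtain h where h: "\<And>k. N ^ m * x $ k = of_int (h k)"
    by metis
  define g where "g = Gcd (range h)"
  have "N \<noteq> 0" unfolding N_def using assms(1,2) by auto
  have x: "x $ k = of_int g / N ^ m * of_int (h k div g)" for k
  proof -
    have "(of_int (h k) :: rat) = of_int g * of_int (h k div g)"
      by (metis Gcd_dvd dvd_mult_div_cancel g_def of_int_mult rangeI)
    moreover have "x $ k = of_int (h k) / N ^ m"
      using h[of k] \<open>N \<noteq> 0\<close> by (simp add: eq_divide_eq mult.commute)
    ultimately show ?thesis by simp
  qed
  from assms(3) obtain k where "x $ k \<noteq> 0" by (auto simp: vec_eq_iff)
  then have "h k \<noteq> 0" using h[of k] \<open>N \<noteq> 0\<close> by auto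
  then have "g \<noteq> 0" unfolding g_def by (auto simp: Gcd_0_iff)
  show thesis
  proof
    have "N ^ m * (of_int g / N ^ m) \<in> \<int>"
      using \<open>N \<noteq> 0\<close> by simp
    then show "of_int g / N ^ m \<in> ZS PS"
      unfolding ZS_iff[OF assms(1,2)] N_def[symmetric] by blast
    show "x = (of_int g / N ^ m) *s (\<chi> k. of_int (h k div g))"
      using x by (simp add: vec_eq_iff)
    show "is_unit d" if "\<forall>k. d dvd h k div g" for d
      using common_divisor_div_Gcd_is_unit \<open>g \<noteq> 0\<close> that unfolding g_def by blast
  qed
qed

lemma prim_vecs_ZS_subset_unit_smult:
  fixes i0 :: "'n::finite"
  assumes "finite PS" and "\<forall>p\<in>PS. prime p" and "CARD('n) \<ge> 2"
  shows "prim_vecs (ZS PS) i0 \<subseteq> {u *s v | u v. u \<in> ZS_units PS \<and> v \<in> prim_vecs \<int> i0}"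
proof
  fix x assume "x \<in> prim_vecs (ZS PS) i0"
  then obtain B where B: "B \<in> SL_over (ZS PS)" and x_col: "x = B *v axis i0 1"
    unfolding prim_vecs_def by auto
  have "0 \<notin> PS" using assms(2) by auto
  have B_ZS: "B $ i $ j \<in> ZS PS" for i j using B by (simp add: SL_over_def)
  have "det B = 1" using B by (simp add: SL_over_def)
  have x_ZS: "x $ k \<in> ZS PS" for k
    using B_ZS by (simp add: x_col matrix_vector_mult_axis_nth)
  have "x \<noteq> 0"
  proof
    assume "x = 0"
    then have "column i0 B = 0"
      by (simp add: x_col column_def vec_eq_iff matrix_vector_mult_axis_nth)
    with \<open>det B = 1\<close> show False by (simp add: det_zero_column)
  qed
  then obtain u f where u: "u \<in> ZS PS" and x: "x = u *s (\<chi> k. of_int (f k))"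
    and f: "\<And>d. \<forall>k. d dvd f k \<Longrightarrow> is_unit d"
    using ZS_vector_eq_scaled_primitive[OF assms(1) \<open>0 \<notin> PS\<close> _ x_ZS] by blast
  define v :: "rat^'n" where "v = (\<chi> k. of_int (f k))"
  define B' where "B' = (\<chi> i j. if j = i0 then v $ i else B $ i $ j)"
  have "B = scale_column i0 u B'"
    using x_col x by (auto simp: vec_eq_iff scale_column_def B'_def v_def matrix_vector_mult_axis_nth)
  then have "u * det B' = 1"
    using \<open>det B = 1\<close> by (simp add: det_scale_column)
  moreover have "det B' \<in> ZS PS"
    using B_ZS Ints_subset_ZS[OF assms(1) \<open>0 \<notin> PS\<close>]
    by (intro det_in_ZS[OF assms(1) \<open>0 \<notin> PS\<close>]) (auto simp: B'_def v_def)
  ultimately have "u \<in> ZS_units PS"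
    using u ZS_units_iff[OF assms(1,2)] by (metis inverse_unique mult_zero_left zero_neq_one)
  moreover have "v \<in> prim_vecs \<int> i0"
    unfolding v_def by (rule primitive_int_vector_in_prim_vecs_Ints[OF assms(3) f])
  ultimately show "x \<in> {u *s v | u v. u \<in> ZS_units PS \<and> v \<in> prim_vecs \<int> i0}"
    using x v_def by blast
qed

lemma unit_smult_subset_prim_vecs_ZS:
  fixes i0 :: "'n::finite"
  assumes "finite PS" and "\<forall>p\<in>PS. prime p" and "CARD('n) \<ge> 2"
  shows "{u *s v | u v. u \<in> ZS_units PS \<and> v \<in> prim_vecs \<int> i0} \<subseteq> prim_vecs (ZS PS) i0"
proof safe
  fix u v assume "u \<in> ZS_units PS" and "v \<in> prim_vecs \<int> i0"
  then have u: "u \<in> ZS PS" "u \<noteq> 0" "inverse u \<in> ZS PS"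
    using ZS_units_iff[OF assms(1,2)] by auto
  obtain A where A: "A \<in> SL_over \<int>" and v: "v = A *v axis i0 1"
    using \<open>v \<in> prim_vecs \<int> i0\<close> unfolding prim_vecs_def by auto
  obtain j where "j \<noteq> i0" using ex_other_index[OF assms(3)] .
  have "0 \<notin> PS" using assms(2) by auto
  note ZS_closed = Ints_subset_ZS[OF assms(1) this] ZS_mult[OF assms(1) this]
  define B where "B = scale_column j (inverse u) (scale_column i0 u A)"
  have "det B = 1"
    using A u(2) by (simp add: B_def det_scale_column SL_over_def)
  moreover have "B $ a $ b \<in> ZS PS" for a b
  proof -
    have "A $ a $ b' \<in> ZS PS" for b'
      using A ZS_closed(1) by (auto simp: SL_over_def)
    then show ?thesis using u by (auto simp: B_def scale_column_def intro!: ZS_closed(2))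
  qed
  moreover have "B *v axis i0 1 = u *s v"
    using \<open>j \<noteq> i0\<close> by (simp add: v B_def scale_column_mult_other_axis scale_column_mult_axis)
  ultimately show "u *s v \<in> prim_vecs (ZS PS) i0"
    unfolding prim_vecs_def SL_over_def by (auto intro!: exI[of _ B])
qed

theorem proposition2p4:
  fixes PS :: "nat set" and i0 :: "'n::finite"
  assumes "finite PS" and "\<forall>p\<in>PS. prime p" and "CARD('n) \<ge> 2"
  shows "prim_vecs (ZS PS) i0 =
           {u *s v | u v. u \<in> ZS_units PS \<and> v \<in> prim_vecs \<int> i0}"
  using prim_vecs_ZS_subset_unit_smult[OF assms] unit_smult_subset_prim_vecs_ZS[OF assms]
  by (rule equalityI)

end
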